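(* Let $\operatorname{pend}(n)$ denote the number of partitions of $n$ in which no even part appears exactly once (i.e., each even part size that occurs has multiplicity at least $2$; odd parts are unrestricted), and let $\operatorname{pond}(n)$ denote the number of partitions of $n$ in which no odd part appears exactly once (i.e., each odd part size that occurs has multiplicity at least $2$; even parts are unrestricted). Then, as formal power series in $q$, $$\sum_{n\ge 0}(-1)^n \operatorname{pend}(n)q^n=\frac{f_1f_{12}}{f_2^2f_6},\qquad \sum_{n\ge 0}(-1)^n \operatorname{pond}(n)q^n=\frac{f_3f_4}{f_2^2f_6}.$$
   Context: For a positive integer $r$, $f_r:=(q^r;q^r)_\infty=\prod_{k\ge1}(1-q^{rk})$. By convention $\operatorname{pend}(0)=\operatorname{pond}(0)=1$. *)

theory Defs
  imports "HOL-Library.Multiset" "HOL-Computational_Algebra.Formal_Power_Series"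
begin

definition partitions :: "nat \<Rightarrow> nat multiset set" where
  "partitions n = {M. (\<forall>x\<in>#M. 0 < x) \<and> sum_mset M = n}"

definition pend :: "nat \<Rightarrow> nat" where
  "pend n = card {M \<in> partitions n. \<forall>k. even k \<longrightarrow> count M k \<noteq> 1}"

definition pond :: "nat \<Rightarrow> nat" where
  "pond n = card {M \<in> partitions n. \<forall>k. odd k \<longrightarrow> count M k \<noteq> 1}"

text \<open>f_r = prod_{k>=1} (1 - q^(r k)) as a formal power series: its N-th coefficient
  is the N-th coefficient of the finite product over k = 1..N (the remaining factors
  do not affect coefficients of degree at most N when r >= 1).\<close>
definition fq :: "nat \<Rightarrow> real fps" where
  "fq r = Abs_fps (\<lambda>N. fps_nth (\<Prod>k\<in>{1..N}. (1 - fps_X ^ (r * k))) N)"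

end

theory Submission
  imports Defs
begin

(*
  A partition is determined by the multiplicities of its parts, so the partitions in which
  every part k occurs with a multiplicity from a set S_k are generated by the product over k
  of the series sum_{j in S_k} q^(k j). Forbidding multiplicity one turns the factor
  1/(1 - x), x = q^k, into 1/(1 - x) - x = (1 - x^6) / ((1 - x^2) (1 - x^3)). Applied to the
  even parts (for pend) or to the odd parts (for pond), this expresses both generating
  functions through f_r and the odd-index products (q^r; q^(2r)). The substitution q -> -q
  fixes f_r for even r and turns (q^r; q^(2r)) into (-q^r; q^(2r)) for odd r, and
  (-q^r; q^(2r)) (q^r; q^(2r)) = (q^(2r); q^(4r)) gives the stated eta quotients.
*)

unbundle fps_syntax

section \<open>Infinite products of formal power series\<close>

text \<open>For admissible factors,
  i.e. \<open>h k = 1 + O(X\<^sup>k)\<close>, every longer partial product has the same n-th coefficient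
  (\<open>fps_infprod_nth\<close>), so this is the usual infinite product, as in the definition of \<open>fq\<close>.\<close>

definition fps_infprod :: "(nat \<Rightarrow> 'a :: comm_semiring_1 fps) \<Rightarrow> 'a fps" where
  "fps_infprod h = Abs_fps (\<lambda>n. (\<Prod>k\<in>{1..n}. h k) $ n)"

definition infprod_admissible :: "(nat \<Rightarrow> 'a :: comm_semiring_1 fps) \<Rightarrow> bool" where
  "infprod_admissible h \<longleftrightarrow> (\<forall>k\<ge>1. h k $ 0 = 1 \<and> (\<forall>i. 0 < i \<and> i < k \<longrightarrow> h k $ i = 0))"

lemma fps_mult_nth_eq_left:
  fixes f g :: "'a :: semiring_1 fps"
  assumes "g $ 0 = 1" and "\<And>j. 0 < j \<Longrightarrow> j \<le> n \<Longrightarrow> g $ j = 0"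
  shows "(f * g) $ n = f $ n"
proof -
  have "(f * g) $ n = (\<Sum>i=0..n. f $ i * g $ (n - i))" by (rule fps_mult_nth)
  also have "\<dots> = (\<Sum>i=0..n. if i = n then f $ n else 0)"
    by (rule sum.cong) (use assms in auto)
  finally show ?thesis by simp
qed

lemma fps_infprod_nth:
  assumes "infprod_admissible h" and "n \<le> m"
  shows "fps_infprod h $ n = (\<Prod>k\<in>{1..m}. h k) $ n"
  using assms(2)
proof (induction m rule: dec_induct)
  case base
  show ?case by (simp add: fps_infprod_def)
next
  case (step m)
  have "(\<Prod>k\<in>{1..Suc m}. h k) $ n = ((\<Prod>k\<in>{1..m}. h k) * h (Suc m)) $ n" by simp
  also have "\<dots> = (\<Prod>k\<in>{1..m}. h k) $ n"
    by (rule fps_mult_nth_eq_left) (use assms(1) step(1) in \<open>auto simp: infprod_admissible_def\<close>)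
  finally show ?case using step.IH by simp
qed

lemma fps_infprod_nth_0 [simp]: "fps_infprod h $ 0 = 1"
  by (simp add: fps_infprod_def)

lemma fps_infprod_cong:
  assumes "\<And>k. k \<ge> 1 \<Longrightarrow> h k = g k"
  shows "fps_infprod h = fps_infprod g"
proof -
  have "(\<Prod>k\<in>{1..n}. h k) = (\<Prod>k\<in>{1..n}. g k)" for n
    by (rule prod.cong) (use assms in auto)
  then show ?thesis by (simp add: fps_infprod_def)
qed

lemma infprod_admissible_mult:
  assumes "infprod_admissible h" and "infprod_admissible g"
  shows "infprod_admissible (\<lambda>k. h k * g k)"
  unfolding infprod_admissible_def
proof (intro allI impI conjI)
  fix k i :: nat
  assume k: "k \<ge> 1"
  then show "(h k * g k) $ 0 = 1" using assms by (simp add: infprod_admissible_def)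
  assume i: "0 < i \<and> i < k"
  have "h k $ j * g k $ (i - j) = 0" if "j \<le> i" for j
    using assms k i that by (cases "j = 0") (auto simp: infprod_admissible_def)
  then show "(h k * g k) $ i = 0" by (simp add: fps_mult_nth)
qed

lemma fps_infprod_mult:
  assumes "infprod_admissible h" and "infprod_admissible g"
  shows "fps_infprod h * fps_infprod g = fps_infprod (\<lambda>k. h k * g k)"
proof (rule fps_ext)
  fix n
  have "(fps_infprod h * fps_infprod g) $ n
      = (\<Sum>i=0..n. (\<Prod>k\<in>{1..n}. h k) $ i * (\<Prod>k\<in>{1..n}. g k) $ (n - i))"
    unfolding fps_mult_nth
    by (rule sum.cong)
      (simp_all add: fps_infprod_nth[OF assms(1), of _ n] fps_infprod_nth[OF assms(2), of "n - _" n])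
  also have "\<dots> = fps_infprod (\<lambda>k. h k * g k) $ n"
    by (simp add: fps_infprod_def fps_mult_nth prod.distrib)
  finally show "(fps_infprod h * fps_infprod g) $ n = fps_infprod (\<lambda>k. h k * g k) $ n" .
qed

lemma infprod_admissible_if:
  "infprod_admissible h \<Longrightarrow> infprod_admissible (\<lambda>k. if P k then h k else 1)"
  by (simp add: infprod_admissible_def)

lemma fps_infprod_split:
  assumes "infprod_admissible h"
  shows "fps_infprod (\<lambda>k. if P k then h k else 1) * fps_infprod (\<lambda>k. if P k then 1 else h k)
    = fps_infprod h"
proof -
  have "infprod_admissible (\<lambda>k. if P k then 1 else h k)"
    using assms by (simp add: infprod_admissible_def)
  with infprod_admissible_if[OF assms] show ?thesis by (simp add: fps_infprod_mult if_distrib cong: if_cong)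
qed

lemma prod_even_part:
  "(\<Prod>k\<in>{1..2 * n}. if even k then h k else 1) = (\<Prod>j\<in>{1..n::nat}. h (2 * j))"
  by (induction n) (simp_all add: mult.commute)

lemma fps_infprod_even:
  assumes "infprod_admissible h"
  shows "fps_infprod (\<lambda>k. if even k then h k else 1) = fps_infprod (\<lambda>j. h (2 * j))"
proof (rule fps_ext)
  fix n
  have "fps_infprod (\<lambda>k. if even k then h k else 1) $ n
      = (\<Prod>k\<in>{1..2 * n}. if even k then h k else 1) $ n"
    by (rule fps_infprod_nth[OF infprod_admissible_if[OF assms]]) simp
  also have "\<dots> = (\<Prod>j\<in>{1..n}. h (2 * j)) $ n"
    by (simp only: prod_even_part)
  finally show "fps_infprod (\<lambda>k. if even k then h k else 1) $ n = fps_infprod (\<lambda>j. h (2 * j)) $ n"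
    by (simp add: fps_infprod_def)
qed

section \<open>The products \<open>f\<^sub>r\<close> and \<open>(c q\<^sup>r; q\<^sup>2\<^sup>r)\<^sub>\<infinity>\<close>\<close>

lemma infprod_admissible_one_minus_X_power:
  assumes "0 < r"
  shows "infprod_admissible (\<lambda>k. 1 - fps_const c * fps_X ^ (r * k) :: 'a :: comm_ring_1 fps)"
  using assms by (auto simp: infprod_admissible_def)

lemma fq_eq_fps_infprod: "fq r = fps_infprod (\<lambda>k. 1 - fps_X ^ (r * k))"
  unfolding fq_def fps_infprod_def ..

lemma fq_nth_0 [simp]: "fq r $ 0 = 1"
  by (simp add: fq_eq_fps_infprod)

lemma fq_double:
  assumes "0 < r"
  shows "fq (2 * r) = fps_infprod (\<lambda>k. if even k then 1 - fps_X ^ (r * k) else 1)"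
proof -
  have "fps_infprod (\<lambda>k. if even k then 1 - fps_X ^ (r * k) else 1)
      = fps_infprod (\<lambda>j. 1 - fps_X ^ (r * (2 * j)) :: real fps)"
    using fps_infprod_even infprod_admissible_one_minus_X_power[OF assms, of 1] by simp
  then show ?thesis by (simp add: fq_eq_fps_infprod ac_simps)
qed

definition odd_qpoch :: "'a :: comm_ring_1 \<Rightarrow> nat \<Rightarrow> 'a fps" where
  "odd_qpoch c r = fps_infprod (\<lambda>k. if odd k then 1 - fps_const c * fps_X ^ (r * k) else 1)"

lemma odd_qpoch_mult_fq_double:
  assumes "0 < r"
  shows "odd_qpoch 1 r * fq (2 * r) = fq r"
proof -
  have "infprod_admissible (\<lambda>k. 1 - fps_X ^ (r * k) :: real fps)"
    using infprod_admissible_one_minus_X_power[OF assms, of 1] by simp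
  then have "fq r = fps_infprod (\<lambda>k. if odd k then 1 - fps_X ^ (r * k) else 1)
      * fps_infprod (\<lambda>k. if odd k then 1 else 1 - fps_X ^ (r * k))"
    unfolding fq_eq_fps_infprod by (rule fps_infprod_split[symmetric])
  also have "fps_infprod (\<lambda>k. if odd k then 1 else 1 - fps_X ^ (r * k)) = fq (2 * r)"
    by (simp add: fq_double[OF assms]) (rule fps_infprod_cong, simp)
  finally show ?thesis by (simp add: odd_qpoch_def cong: if_cong)
qed

lemma odd_qpoch_neg_mult:
  assumes "0 < r"
  shows "odd_qpoch (-1) r * odd_qpoch 1 r = (odd_qpoch 1 (2 * r) :: 'a :: comm_ring_1 fps)"
proof -
  have "odd_qpoch (-1) r * odd_qpoch 1 r = fps_infprod (\<lambda>k.
      (if odd k then 1 - fps_const (-1) * fps_X ^ (r * k) else 1)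
      * (if odd k then 1 - fps_const 1 * fps_X ^ (r * k) else 1) :: 'a fps)"
    unfolding odd_qpoch_def
    by (intro fps_infprod_mult infprod_admissible_if infprod_admissible_one_minus_X_power assms)
  also have "\<dots> = odd_qpoch 1 (2 * r)"
    unfolding odd_qpoch_def
  proof (rule fps_infprod_cong)
    fix k
    have "fps_X ^ (2 * r * k) = fps_X ^ (r * k) * (fps_X ^ (r * k) :: 'a fps)"
      by (simp add: mult_2 add_mult_distrib flip: power_add)
    then show "(if odd k then 1 - fps_const (-1) * fps_X ^ (r * k) else 1)
      * (if odd k then 1 - fps_const 1 * fps_X ^ (r * k) else 1)
      = (if odd k then 1 - fps_const 1 * fps_X ^ (2 * r * k) else (1 :: 'a fps))"
      by (simp add: algebra_simps fps_eq_iff)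
  qed
  finally show ?thesis .
qed

lemma one_minus_X_power_compose_linear:
  "(1 - fps_const a * fps_X ^ m) oo (fps_const c * fps_X)
     = 1 - fps_const (a * c ^ m) * (fps_X ^ m :: 'a :: comm_ring_1 fps)"
  by (rule fps_ext) (simp add: fps_nth_compose_linear)

lemma fps_infprod_compose_linear:
  "fps_infprod h oo (fps_const c * fps_X)
     = fps_infprod (\<lambda>k. h k oo (fps_const c * fps_X) :: 'a :: idom fps)"
proof (rule fps_ext)
  fix n
  have "(fps_infprod h oo (fps_const c * fps_X)) $ n
      = ((\<Prod>k\<in>{1..n}. h k) oo (fps_const c * fps_X)) $ n"
    by (simp add: fps_infprod_def)
  also have "\<dots> = fps_infprod (\<lambda>k. h k oo (fps_const c * fps_X)) $ n"
    by (simp add: fps_compose_prod_distrib fps_infprod_def)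
  finally show "(fps_infprod h oo (fps_const c * fps_X)) $ n
      = fps_infprod (\<lambda>k. h k oo (fps_const c * fps_X)) $ n" .
qed

text \<open>Composition with \<open>fps_const (-1) * fps_X\<close> is the substitution \<open>q \<mapsto> -q\<close>.\<close>

lemma fq_compose_neg:
  assumes "even r"
  shows "fq r oo (fps_const (-1) * fps_X) = fq r"
proof -
  have "(1 - fps_X ^ (r * k)) oo (fps_const (-1) * fps_X) = (1 - fps_X ^ (r * k) :: real fps)" for k
    using one_minus_X_power_compose_linear[of 1 "r * k" "-1 :: real"] assms by simp
  then show ?thesis by (simp add: fq_eq_fps_infprod fps_infprod_compose_linear)
qed

lemma odd_qpoch_compose_neg:
  "odd_qpoch c r oo (fps_const (-1) * fps_X) = (odd_qpoch (c * (-1) ^ r) r :: 'a :: idom fps)"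
  unfolding odd_qpoch_def fps_infprod_compose_linear
  by (rule fps_infprod_cong) (simp add: one_minus_X_power_compose_linear minus_one_power_iff)

section \<open>Partitions with prescribed multiplicities\<close>

definition mult_series :: "nat set \<Rightarrow> nat \<Rightarrow> 'a :: comm_semiring_1 fps" where
  "mult_series S k = Abs_fps (\<lambda>i. if k dvd i \<and> i div k \<in> S then 1 else 0)"

definition restricted_partitions :: "(nat \<Rightarrow> nat set) \<Rightarrow> nat \<Rightarrow> nat \<Rightarrow> nat multiset set" where
  "restricted_partitions S m n =
     {A. set_mset A \<subseteq> {1..m} \<and> (\<forall>k. count A k \<in> S k) \<and> sum_mset A = n}"

lemma restricted_partitions_0:
  assumes "\<forall>k. 0 \<in> S k"
  shows "restricted_partitions S 0 n = (if n = 0 then {{#}} else {})"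
  using assms by (auto simp: restricted_partitions_def)

lemma restricted_partitions_Suc:
  assumes "\<forall>k. 0 \<in> S k"
  shows "restricted_partitions S (Suc m) n =
    (\<Union>j\<in>{j \<in> S (Suc m). j * Suc m \<le> n}.
       (\<lambda>B. B + replicate_mset j (Suc m)) ` restricted_partitions S m (n - j * Suc m))"
  (is "?L = ?R")
proof
  show "?L \<subseteq> ?R"
  proof
    fix A assume A: "A \<in> ?L"
    define j where "j = count A (Suc m)"
    define B where "B = filter_mset (\<lambda>x. x \<noteq> Suc m) A"
    have AB: "A = B + replicate_mset j (Suc m)"
      unfolding B_def j_def by (rule multiset_eqI) auto
    then have "sum_mset A = sum_mset B + j * Suc m" by simp
    moreover have "set_mset B \<subseteq> {1..m}" "\<forall>k. count B k \<in> S k"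
      using A assms by (auto simp: restricted_partitions_def B_def less_Suc_eq_le)
    ultimately have "B \<in> restricted_partitions S m (n - j * Suc m)" "j * Suc m \<le> n"
      using A by (auto simp: restricted_partitions_def)
    moreover have "j \<in> S (Suc m)" using A by (auto simp: restricted_partitions_def j_def)
    ultimately show "A \<in> ?R" using AB by blast
  qed
  show "?R \<subseteq> ?L"
  proof
    fix A assume "A \<in> ?R"
    then obtain j B where j: "j \<in> S (Suc m)" "j * Suc m \<le> n"
      and B: "B \<in> restricted_partitions S m (n - j * Suc m)"
      and AB: "A = B + replicate_mset j (Suc m)"
      by blast
    have "count B (Suc m) = 0"
      using B by (auto simp: restricted_partitions_def count_eq_zero_iff)
    then have "count A k \<in> S k" for k
      using B AB j by (cases "k = Suc m") (auto simp: restricted_partitions_def)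
    then show "A \<in> ?L"
      using B AB j by (auto simp: restricted_partitions_def)
  qed
qed

lemma finite_restricted_partitions:
  assumes "\<forall>k. 0 \<in> S k"
  shows "finite (restricted_partitions S m n)"
proof (induction m arbitrary: n)
  case 0
  show ?case using assms by (simp add: restricted_partitions_0)
next
  case (Suc m)
  have "finite {j \<in> S (Suc m). j * Suc m \<le> n}"
    by (rule finite_subset[of _ "{..n}"]) auto
  then show ?case by (simp add: restricted_partitions_Suc[OF assms] Suc.IH)
qed

lemma card_restricted_partitions_Suc:
  assumes "\<forall>k. 0 \<in> S k"
  shows "card (restricted_partitions S (Suc m) n) =
    (\<Sum>j | j \<in> S (Suc m) \<and> j * Suc m \<le> n. card (restricted_partitions S m (n - j * Suc m)))"
proof -
  let ?J = "{j \<in> S (Suc m). j * Suc m \<le> n}"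
  let ?add = "\<lambda>j B. B + replicate_mset j (Suc m)"
  have "?J \<subseteq> {..n}" by auto
  then have "finite ?J" by (rule finite_subset) simp
  moreover have "?add i ` restricted_partitions S m (n - i * Suc m)
      \<inter> ?add j ` restricted_partitions S m (n - j * Suc m) = {}" if "i \<noteq> j" for i j
  proof -
    have "count B (Suc m) = 0" if "B \<in> restricted_partitions S m k" for B k
      using that by (auto simp: restricted_partitions_def count_eq_zero_iff)
    then have sub: "?add l ` restricted_partitions S m k \<subseteq> {A. count A (Suc m) = l}" for l k
      by auto
    have "{A. count A (Suc m) = i} \<inter> {A. count A (Suc m) = j} = {}"
      using \<open>i \<noteq> j\<close> by auto
    then show ?thesis
      using Int_mono[OF sub[of i "n - i * Suc m"] sub[of j "n - j * Suc m"]] by auto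
  qed
  moreover have "card (?add j ` restricted_partitions S m k) = card (restricted_partitions S m k)"
    for j k by (rule card_image) (auto simp: inj_on_def)
  ultimately show ?thesis
    by (simp add: restricted_partitions_Suc[OF assms] card_UN_disjoint
        finite_restricted_partitions[OF assms])
qed

lemma mult_series_mult_nth:
  assumes "0 < k"
  shows "(mult_series S k * f) $ n = (\<Sum>j | j \<in> S \<and> j * k \<le> n. f $ (n - j * k))"
proof -
  let ?J = "{j. j \<in> S \<and> j * k \<le> n}"
  have "(mult_series S k * f) $ n
      = (\<Sum>i\<in>{0..n}. if k dvd i \<and> i div k \<in> S then f $ (n - i) else 0)"
    unfolding fps_mult_nth by (rule sum.cong) (simp_all add: mult_series_def)
  also have "\<dots> = (\<Sum>i\<in>(\<lambda>j. j * k) ` ?J. f $ (n - i))"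
    by (rule sum.mono_neutral_cong_right) (use assms in \<open>auto elim!: dvdE simp: mult.commute\<close>)
  also have "\<dots> = (\<Sum>j\<in>?J. f $ (n - j * k))"
    by (rule sum.reindex_cong[where l = "\<lambda>j. j * k"]) (use assms in \<open>auto simp: inj_on_def\<close>)
  finally show ?thesis .
qed

lemma prod_mult_series_nth:
  assumes "\<forall>k. 0 \<in> S k"
  shows "(\<Prod>k\<in>{1..m}. mult_series (S k) k) $ n
    = (of_nat (card (restricted_partitions S m n)) :: 'a :: comm_semiring_1)"
proof (induction m arbitrary: n)
  case 0
  show ?case using assms by (simp add: restricted_partitions_0)
next
  case (Suc m)
  have "(\<Prod>k\<in>{1..Suc m}. mult_series (S k) k) $ n
      = (mult_series (S (Suc m)) (Suc m) * (\<Prod>k\<in>{1..m}. mult_series (S k) k) :: 'a fps) $ n"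
    by (simp add: mult.commute)
  also have "\<dots> = (\<Sum>j | j \<in> S (Suc m) \<and> j * Suc m \<le> n.
      (\<Prod>k\<in>{1..m}. mult_series (S k) k) $ (n - j * Suc m))"
    by (rule mult_series_mult_nth) simp
  also have "\<dots> = of_nat (card (restricted_partitions S (Suc m) n))"
    by (simp only: Suc.IH card_restricted_partitions_Suc[OF assms] of_nat_sum)
  finally show ?case .
qed

lemma restricted_partitions_self:
  "restricted_partitions S n n = {A \<in> partitions n. \<forall>k. count A k \<in> S k}"
proof (intro equalityI subsetI)
  fix A assume "A \<in> restricted_partitions S n n"
  then show "A \<in> {A \<in> partitions n. \<forall>k. count A k \<in> S k}"
    by (force simp: restricted_partitions_def partitions_def)
next
  fix A assume A: "A \<in> {A \<in> partitions n. \<forall>k. count A k \<in> S k}"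
  have "x \<le> n" if "x \<in># A" for x
    using A multi_member_split[OF that] by (auto simp: partitions_def)
  with A show "A \<in> restricted_partitions S n n"
    by (auto simp: restricted_partitions_def partitions_def Suc_le_eq)
qed

lemma infprod_admissible_mult_series:
  assumes "\<forall>k. 0 \<in> S k"
  shows "infprod_admissible (\<lambda>k. mult_series (S k) k)"
  using assms by (auto simp: infprod_admissible_def mult_series_def dest: dvd_imp_le)

theorem fps_infprod_mult_series:
  assumes "\<forall>k. 0 \<in> S k"
  shows "fps_infprod (\<lambda>k. mult_series (S k) k)
    = Abs_fps (\<lambda>n. of_nat (card {A \<in> partitions n. \<forall>k. count A k \<in> S k}) :: 'a :: comm_semiring_1)"
  by (rule fps_ext) (simp only: fps_infprod_def fps_nth_Abs_fps prod_mult_series_nth[OF assms]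
      restricted_partitions_self)

lemma mult_series_UNIV_mult:
  assumes "0 < k"
  shows "mult_series UNIV k * (1 - fps_X ^ k) = (1 :: 'a :: comm_ring_1 fps)"
proof (rule fps_ext)
  fix i
  have "k dvd i \<longleftrightarrow> k dvd i - k" if "k \<le> i"
    using that by (metis dvd_add_left_iff dvd_refl le_add_diff_inverse2)
  then show "(mult_series UNIV k * (1 - fps_X ^ k)) $ i = (1 :: 'a fps) $ i"
    using assms by (auto simp: mult_series_def right_diff_distrib fps_X_power_mult_right_nth
        dest: dvd_imp_le)
qed

lemma mult_series_not_once_mult:
  assumes "0 < k"
  shows "mult_series {j. j \<noteq> 1} k * (1 - fps_X ^ (2 * k)) * (1 - fps_X ^ (3 * k))
    = (1 - fps_X ^ (6 * k) :: 'a :: comm_ring_1 fps)"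
proof -
  let ?u = "mult_series UNIV k :: 'a fps" and ?x = "fps_X ^ k :: 'a fps"
  have "mult_series {j. j \<noteq> 1} k = ?u - ?x"
  proof (rule fps_ext)
    fix i
    have "k dvd i \<and> i div k = 1 \<longleftrightarrow> i = k" using assms by auto
    then show "mult_series {j. j \<noteq> 1} k $ i = (?u - ?x) $ i"
      by (auto simp: mult_series_def)
  qed
  also have "(?u - ?x) * (1 - ?x ^ 2) * (1 - ?x ^ 3)
      = ?u * (1 - ?x) * ((1 + ?x) * (1 - ?x ^ 3)) - ?x * (1 - ?x ^ 2) * (1 - ?x ^ 3)"
    by (simp add: algebra_simps power2_eq_square power3_eq_cube)
  also have "\<dots> = (1 + ?x) * (1 - ?x ^ 3) - ?x * (1 - ?x ^ 2) * (1 - ?x ^ 3)"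
    by (simp only: mult_series_UNIV_mult[OF assms] mult_1_left)
  also have "\<dots> = (1 - ?x ^ 3) * (1 + ?x ^ 3)"
    by (simp add: algebra_simps power2_eq_square power3_eq_cube)
  also have "\<dots> = 1 - ?x ^ 6"
    by (simp add: algebra_simps flip: power_add)
  finally show ?thesis by (simp add: power_mult mult.commute)
qed

lemma once_free_partitions_gf_mult:
  "Abs_fps (\<lambda>n. of_nat (card {A \<in> partitions n. \<forall>k. P k \<longrightarrow> count A k \<noteq> 1}))
     * fps_infprod (\<lambda>k. if P k then 1 else 1 - fps_X ^ k)
     * fps_infprod (\<lambda>k. if P k then 1 - fps_X ^ (2 * k) else 1)
     * fps_infprod (\<lambda>k. if P k then 1 - fps_X ^ (3 * k) else 1)
   = (fps_infprod (\<lambda>k. if P k then 1 - fps_X ^ (6 * k) else 1) :: 'a :: comm_ring_1 fps)"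
proof -
  define S where "S k = (if P k then {j::nat. j \<noteq> 1} else UNIV)" for k
  have S0: "\<forall>k. 0 \<in> S k" by (simp add: S_def)
  then have gf: "Abs_fps (\<lambda>n. of_nat (card {A \<in> partitions n. \<forall>k. P k \<longrightarrow> count A k \<noteq> 1}))
      = (fps_infprod (\<lambda>k. mult_series (S k) k) :: 'a fps)"
    by (simp add: fps_infprod_mult_series S_def)
  have "infprod_admissible (\<lambda>k. mult_series (S k) k :: 'a fps)"
    by (rule infprod_admissible_mult_series[OF S0])
  moreover have "infprod_admissible (\<lambda>k. if P k then 1 else 1 - fps_X ^ k :: 'a fps)"
    and "infprod_admissible (\<lambda>k. if P k then 1 - fps_X ^ (2 * k) else 1 :: 'a fps)"
    and "infprod_admissible (\<lambda>k. if P k then 1 - fps_X ^ (3 * k) else 1 :: 'a fps)"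
    by (auto simp: infprod_admissible_def)
  ultimately have "fps_infprod (\<lambda>k. mult_series (S k) k)
     * fps_infprod (\<lambda>k. if P k then 1 else 1 - fps_X ^ k)
     * fps_infprod (\<lambda>k. if P k then 1 - fps_X ^ (2 * k) else 1)
     * fps_infprod (\<lambda>k. if P k then 1 - fps_X ^ (3 * k) else 1)
   = fps_infprod (\<lambda>k. mult_series (S k) k * (if P k then 1 else 1 - fps_X ^ k)
     * (if P k then 1 - fps_X ^ (2 * k) else 1) * (if P k then 1 - fps_X ^ (3 * k) else (1 :: 'a fps)))"
    by (simp only: fps_infprod_mult infprod_admissible_mult)
  also have "\<dots> = fps_infprod (\<lambda>k. if P k then 1 - fps_X ^ (6 * k) else 1)"
    by (rule fps_infprod_cong)
      (simp add: S_def mult_series_UNIV_mult mult_series_not_once_mult del: One_nat_def)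
  finally show ?thesis by (simp only: gf)
qed

section \<open>The generating functions of \<open>pend\<close> and \<open>pond\<close>\<close>

lemma pend_gf_mult:
  "Abs_fps (\<lambda>n. real (pend n)) * odd_qpoch 1 1 * fq 4 * fq 6 = fq 12"
proof -
  have "fps_infprod (\<lambda>k. if even k then 1 else 1 - fps_X ^ k) = (odd_qpoch 1 1 :: real fps)"
    unfolding odd_qpoch_def by (rule fps_infprod_cong) auto
  then show ?thesis
    using once_free_partitions_gf_mult[of even, where 'a = real]
      fq_double[of 2] fq_double[of 3] fq_double[of 6]
    by (simp add: pend_def)
qed

lemma pond_gf_mult:
  "Abs_fps (\<lambda>n. real (pond n)) * fq 2 * odd_qpoch 1 2 * odd_qpoch 1 3 = odd_qpoch 1 6"
proof -
  have "fps_infprod (\<lambda>k. if odd k then 1 else 1 - fps_X ^ k) = fq 2"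
    unfolding fq_double[of 1, simplified] by (rule fps_infprod_cong) auto
  moreover have "fps_infprod (\<lambda>k. if odd k then 1 - fps_X ^ (r * k) else 1)
      = (odd_qpoch 1 r :: real fps)" for r
    unfolding odd_qpoch_def by (rule fps_infprod_cong) auto
  ultimately show ?thesis
    using once_free_partitions_gf_mult[of odd, where 'a = real] by (simp add: pond_def)
qed

lemma fps_compose_neg_X_Abs_fps:
  "Abs_fps f oo (fps_const (-1) * fps_X) = Abs_fps (\<lambda>n. (-1) ^ n * f n :: 'a :: comm_ring_1)"
  by (rule fps_ext) simp

lemma pend_alternating_gf_mult:
  "Abs_fps (\<lambda>n. (-1) ^ n * real (pend n)) * (fq 2 ^ 2 * fq 6) = fq 1 * fq 12"
proof -
  let ?G = "Abs_fps (\<lambda>n. (-1) ^ n * real (pend n))"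
  have "(Abs_fps (\<lambda>n. real (pend n)) * odd_qpoch 1 1 * fq 4 * fq 6) oo (fps_const (-1) * fps_X)
      = fq 12 oo (fps_const (-1) * fps_X)"
    by (simp only: pend_gf_mult)
  then have twisted: "?G * odd_qpoch (-1) 1 * fq 4 * fq 6 = fq 12"
    by (simp add: fps_compose_mult_distrib fps_compose_neg_X_Abs_fps fq_compose_neg
        odd_qpoch_compose_neg)
  have fq1: "odd_qpoch 1 1 * fq 2 = fq 1"
    using odd_qpoch_mult_fq_double[of 1] by simp
  have "odd_qpoch (-1) 1 * odd_qpoch 1 1 = (odd_qpoch 1 2 :: real fps)"
    using odd_qpoch_neg_mult[of 1] by (simp del: One_nat_def)
  then have fq2: "odd_qpoch (-1) 1 * odd_qpoch 1 1 * fq 4 = fq 2"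
    using odd_qpoch_mult_fq_double[of 2] by (simp only:) simp
  have "?G * (fq 2 ^ 2 * fq 6) = ?G * (odd_qpoch (-1) 1 * odd_qpoch 1 1 * fq 4) * fq 2 * fq 6"
    by (simp only: fq2) (simp add: power2_eq_square ac_simps)
  also have "\<dots> = (?G * odd_qpoch (-1) 1 * fq 4 * fq 6) * (odd_qpoch 1 1 * fq 2)"
    by (simp add: ac_simps)
  also have "\<dots> = fq 1 * fq 12"
    unfolding twisted fq1 by (rule mult.commute)
  finally show ?thesis .
qed

lemma pond_alternating_gf_mult:
  "Abs_fps (\<lambda>n. (-1) ^ n * real (pond n)) * (fq 2 ^ 2 * fq 6) = fq 3 * fq 4"
proof -
  let ?G = "Abs_fps (\<lambda>n. (-1) ^ n * real (pond n))"
  have "(Abs_fps (\<lambda>n. real (pond n)) * fq 2 * odd_qpoch 1 2 * odd_qpoch 1 3) oo (fps_const (-1) * fps_X)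
      = odd_qpoch 1 6 oo (fps_const (-1) * fps_X)"
    by (simp only: pond_gf_mult)
  then have twisted: "?G * fq 2 * odd_qpoch 1 2 * odd_qpoch (-1) 3 = odd_qpoch 1 6"
    by (simp add: fps_compose_mult_distrib fps_compose_neg_X_Abs_fps fq_compose_neg
        odd_qpoch_compose_neg)
  have fq2: "odd_qpoch 1 2 * fq 4 = fq 2"
    using odd_qpoch_mult_fq_double[of 2] by simp
  have fq3: "odd_qpoch 1 3 * fq 6 = fq 3"
    using odd_qpoch_mult_fq_double[of 3] by simp
  have fq6: "odd_qpoch 1 6 * fq 12 = fq 6"
    using odd_qpoch_mult_fq_double[of 6] by simp
  have "?G * (fq 2 ^ 2 * fq 6) = ?G * fq 2 * (odd_qpoch 1 2 * fq 4) * (odd_qpoch 1 6 * fq 12)"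
    by (simp only: fq2 fq6) (simp add: power2_eq_square ac_simps)
  also have "\<dots> = (?G * fq 2 * odd_qpoch 1 2 * odd_qpoch (-1) 3) * fq 12 * (odd_qpoch 1 3 * fq 4)"
    unfolding odd_qpoch_neg_mult[of 3, simplified, symmetric] by (simp add: ac_simps)
  also have "\<dots> = fq 3 * fq 4"
    by (simp only: twisted fq6 flip: fq3) (simp add: ac_simps)
  finally show ?thesis .
qed

theorem theorem2p3:
  shows "Abs_fps (\<lambda>n. (-1) ^ n * real (pend n)) = fq 1 * fq 12 / (fq 2 ^ 2 * fq 6) \<and>
         Abs_fps (\<lambda>n. (-1) ^ n * real (pond n)) = fq 3 * fq 4 / (fq 2 ^ 2 * fq 6)"
proof -
  have "(fq 2 ^ 2 * fq 6) $ 0 \<noteq> 0" by (simp add: fps_nth_power_0)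
  then have "fq 2 ^ 2 * fq 6 \<noteq> 0" by (metis fps_zero_nth)
  then show ?thesis
    unfolding pend_alternating_gf_mult[symmetric] pond_alternating_gf_mult[symmetric]
    by (simp only: nonzero_mult_div_cancel_right simp_thms)
qed

end
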